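(* For each $p\ge1$ and $N\in\mathbb N$ there exists a constant $K_N\in(1,1+\frac1N)$ such that for every $T>0$ $$\mathbb E\Bigl[\Bigl(\sup_{t\in[0,T]}Y^N(t)\Bigr)^p\Bigr]\le \mu^p\exp\{pK_N^{p-1}T\}.$$ In particular, for every $p\ge 1$ and $T>0$, $\sup_{N}\sup_{t\in[0,T]}\mathbb E[(Y^N(t))^p]<\infty$.
   Context: Model. Fix $\tau>0$, $\mu\ge 0$, $N\in\mathbb N$, and write $L=\lfloor \tau N\rfloor$. The state space is $\Omega_N=[0,\infty)^{L+1}$, with elements $x=(x_{-L},\dots,x_0)$. Define $\theta_N^\pm:\Omega_N\to\Omega_N$ by $(\theta_N^\pm x)_j=x_{j+1}$ for $-L\le j<0$, $(\theta_N^+x)_0=x_0(1+\frac1N)$, $(\theta_N^-x)_0=\max\{x_0(1-\frac{x_{-L}}{N^2}),0\}$. Let $\xi^N=(\xi^N(n))_{n\ge0}$ be the discrete-time Markov chain on $\Omega_N$ moving from $x$ to $\theta_N^+x$ or $\theta_N^-x$ with probability $1/2$ each, with $\xi^N_j(0)=\mu N$ for all $j$. Let $(\sigma_n)_{n\ge1}$ be i.i.d. Exp(1), independent of $\xi^N$, $J_0=0$, $J_n=\sigma_1+\dots+\sigma_n$, and $X^N(t)=\xi^N(n)$ for $t\in[J_n,J_{n+1})$. For $t\ge0$ set $Y^N(t)=X^N_0(Nt)/N$. *)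

theory Defs
  imports "HOL-Probability.Probability"
begin

definition Lof :: "real \<Rightarrow> nat \<Rightarrow> nat" where
  "Lof tau N = nat \<lfloor>tau * real N\<rfloor>"

text \<open>States x = (x_{-L},...,x_0) are represented as functions int => real,
  meaningful on the index range -L..0 (set to 0 outside).\<close>
definition thetaP :: "nat \<Rightarrow> nat \<Rightarrow> (int \<Rightarrow> real) \<Rightarrow> (int \<Rightarrow> real)" where
  "thetaP N L x = (\<lambda>j. if - int L \<le> j \<and> j < 0 then x (j + 1)
                     else if j = 0 then x 0 * (1 + 1 / real N) else 0)"

definition thetaM :: "nat \<Rightarrow> nat \<Rightarrow> (int \<Rightarrow> real) \<Rightarrow> (int \<Rightarrow> real)" where
  "thetaM N L x = (\<lambda>j. if - int L \<le> j \<and> j < 0 then x (j + 1)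
                     else if j = 0 then max (x 0 * (1 - x (- int L) / (real N)^2)) 0 else 0)"

text \<open>Sample points: omega n = (coin flip deciding step n -> n+1, sigma_{n+1}).\<close>
definition model_space :: "(nat \<Rightarrow> bool \<times> real) measure" where
  "model_space = PiM UNIV (\<lambda>_::nat. measure_pmf (bernoulli_pmf (1/2))
                          \<Otimes>\<^sub>M density lborel (exponential_density 1))"

primrec chain :: "real \<Rightarrow> real \<Rightarrow> nat \<Rightarrow> (nat \<Rightarrow> bool \<times> real) \<Rightarrow> nat \<Rightarrow> int \<Rightarrow> real" where
  "chain tau mu N \<omega> 0 = (\<lambda>j. if - int (Lof tau N) \<le> j \<and> j \<le> 0 then mu * real N else 0)"
| "chain tau mu N \<omega> (Suc n) = (if fst (\<omega> n) then thetaP N (Lof tau N) (chain tau mu N \<omega> n)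
                                 else thetaM N (Lof tau N) (chain tau mu N \<omega> n))"

definition jump :: "(nat \<Rightarrow> bool \<times> real) \<Rightarrow> nat \<Rightarrow> real" where
  "jump \<omega> n = (\<Sum>k<n. snd (\<omega> k))"

text \<open>X^N(t) = xi^N(n) for t in [J_n, J_{n+1}).\<close>
definition Xproc :: "real \<Rightarrow> real \<Rightarrow> nat \<Rightarrow> (nat \<Rightarrow> bool \<times> real) \<Rightarrow> real \<Rightarrow> int \<Rightarrow> real" where
  "Xproc tau mu N \<omega> t = chain tau mu N \<omega> (LEAST n. t < jump \<omega> (Suc n))"

definition Yproc :: "real \<Rightarrow> real \<Rightarrow> nat \<Rightarrow> (nat \<Rightarrow> bool \<times> real) \<Rightarrow> real \<Rightarrow> real" where
  "Yproc tau mu N \<omega> t = Xproc tau mu N \<omega> (real N * t) 0 / real N"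

end

theory Submission
  imports Defs
begin

(*
  A down-step never increases X_0, whatever the delayed coordinate is;
  hence after n steps X_0 <= mu N (1 + 1/N)^U_n, where U_n = heads omega n counts the up-steps
  among the first n, and Y^N(t)^p <= mu^p b^U_n with b = (1 + 1/N)^p, n being the number of
  jumps before time N t. Telescoping b^U_n over the up-steps bounds the whole path on [0, T]
  by the single variable
    Z = heads_majorant b (N T) = 1 + sum_k [J_(k+1) <= N T and step k is up] (b - 1) b^U_k,
  so the supremum costs nothing. Coins and clocks being independent,
    E Z = 1 + sum_k (c - 1) c^k P(J_(k+1) <= N T),   c = (1 + b) / 2,
  and P(J_(k+1) <= s) = P(Poisson(s) > k) turns the series into E c^Poisson(s) = exp((c - 1) s).
  Finally (c - 1) N T = (b - 1) N T / 2, and the mean value theorem writes b - 1 = p K^(p-1) / N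
  with 1 < K < 1 + 1/N.
*)

section \<open>Pathwise domination\<close>

definition heads :: "(nat \<Rightarrow> bool \<times> real) \<Rightarrow> nat \<Rightarrow> nat" where
  "heads \<omega> n = (\<Sum>i<n. of_bool (fst (\<omega> i)))"

lemma heads_0 [simp]: "heads \<omega> 0 = 0"
  by (simp add: heads_def)

lemma heads_Suc [simp]: "heads \<omega> (Suc n) = heads \<omega> n + of_bool (fst (\<omega> n))"
  by (simp add: heads_def)

lemma power_heads_eq_prod: "b ^ heads \<omega> k = (\<Prod>i<k. if fst (\<omega> i) then b else 1)"
  by (induction k) (simp_all add: mult.commute)

lemma power_heads_telescope:
  fixes b :: "'a :: comm_ring_1"
  shows "b ^ heads \<omega> n = 1 + (\<Sum>k<n. of_bool (fst (\<omega> k)) * (b - 1) * b ^ heads \<omega> k)"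
  by (induction n) (simp_all add: algebra_simps)

lemma chain_nonneg:
  assumes "mu \<ge> 0"
  shows "chain tau mu N \<omega> n j \<ge> 0"
  using assms by (induction n arbitrary: j) (auto simp: thetaP_def thetaM_def)

lemma chain_0_le_heads:
  assumes "mu \<ge> 0"
  shows "chain tau mu N \<omega> n 0 \<le> mu * real N * (1 + 1 / real N) ^ heads \<omega> n"
proof (induction n)
  case 0
  then show ?case by simp
next
  case (Suc n)
  define x where "x = chain tau mu N \<omega> n"
  have "x 0 \<ge> 0" "x (- int (Lof tau N)) \<ge> 0"
    using chain_nonneg[OF assms] by (simp_all add: x_def)
  then have down: "thetaM N (Lof tau N) x 0 \<le> x 0"
    by (simp add: thetaM_def mult_left_le)
  have IH: "x 0 \<le> mu * real N * (1 + 1 / real N) ^ heads \<omega> n"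
    using Suc by (simp add: x_def)
  show ?case
  proof (cases "fst (\<omega> n)")
    case True
    have "x 0 * (1 + 1 / real N) \<le> mu * real N * (1 + 1 / real N) ^ heads \<omega> n * (1 + 1 / real N)"
      using IH by (rule mult_right_mono) simp
    then show ?thesis
      using True by (simp add: x_def thetaP_def mult_ac)
  next
    case False
    then show ?thesis
      using down IH by (simp add: x_def)
  qed
qed

definition majorant_term :: "real \<Rightarrow> real \<Rightarrow> nat \<Rightarrow> (nat \<Rightarrow> bool \<times> real) \<Rightarrow> ennreal" where
  "majorant_term b s k \<omega> = ennreal (of_bool (jump \<omega> (Suc k) \<le> s \<and> fst (\<omega> k)) * (b - 1) * b ^ heads \<omega> k)"

definition heads_majorant :: "real \<Rightarrow> real \<Rightarrow> (nat \<Rightarrow> bool \<times> real) \<Rightarrow> ennreal" where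
  "heads_majorant b s \<omega> = 1 + (\<Sum>k. majorant_term b s k \<omega>)"

lemma power_heads_le_majorant:
  assumes "b \<ge> 1" and jumps: "\<And>m. m < n \<Longrightarrow> jump \<omega> (Suc m) \<le> s"
  shows "ennreal (b ^ heads \<omega> n) \<le> heads_majorant b s \<omega>"
proof -
  let ?a = "\<lambda>k. of_bool (jump \<omega> (Suc k) \<le> s \<and> fst (\<omega> k)) * (b - 1) * b ^ heads \<omega> k"
  have "b ^ heads \<omega> n = 1 + (\<Sum>k<n. of_bool (fst (\<omega> k)) * (b - 1) * b ^ heads \<omega> k)"
    by (rule power_heads_telescope)
  also have "\<dots> = 1 + (\<Sum>k<n. ?a k)"
    using jumps by (auto intro!: sum.cong)
  finally have "ennreal (b ^ heads \<omega> n) = ennreal (1 + (\<Sum>k<n. ?a k))"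
    by simp
  also have "\<dots> = 1 + (\<Sum>k<n. ennreal (?a k))"
    using assms(1) by (subst ennreal_plus) (auto simp: sum_ennreal intro!: sum_nonneg)
  also have "(\<Sum>k<n. ennreal (?a k)) \<le> (\<Sum>k. ennreal (?a k))"
    by (rule sum_le_suminf) auto
  finally show ?thesis
    unfolding heads_majorant_def majorant_term_def by (simp add: add_left_mono)
qed

lemma jump_le_before_Least:
  assumes "m < (LEAST n. t < jump \<omega> (Suc n))"
  shows "jump \<omega> (Suc m) \<le> t"
  using not_less_Least[OF assms] by simp

lemma Yproc_powr_le_majorant:
  assumes "mu \<ge> 0" "p \<ge> 0" "t \<le> T"
  shows "ennreal (Yproc tau mu N \<omega> t powr p)
           \<le> ennreal (mu powr p) * heads_majorant ((1 + 1 / real N) powr p) (real N * T) \<omega>"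
proof -
  define a where "a = 1 + 1 / real N"
  define n where "n = (LEAST n. real N * t < jump \<omega> (Suc n))"
  have a: "a \<ge> 1"
    by (simp add: a_def)
  have Y: "Yproc tau mu N \<omega> t = chain tau mu N \<omega> n 0 / real N"
    by (simp add: Yproc_def Xproc_def n_def)
  have "0 \<le> Yproc tau mu N \<omega> t"
    unfolding Y using chain_nonneg[OF assms(1)] by simp
  moreover have "Yproc tau mu N \<omega> t \<le> mu * a ^ heads \<omega> n"
    unfolding Y using chain_0_le_heads[OF assms(1), of tau N \<omega> n] assms(1) a
    \<comment> \<open>for N = 0 the division yields the junk value Y = 0\<close>
    by (cases "N = 0") (simp_all add: a_def divide_le_eq mult_ac)
  ultimately have "Yproc tau mu N \<omega> t powr p \<le> (mu * a ^ heads \<omega> n) powr p"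
    using assms(2) by (intro powr_mono2) auto
  also have "\<dots> = mu powr p * (a powr p) ^ heads \<omega> n"
    using assms(1) a by (simp add: powr_mult powr_realpow[symmetric] powr_powr mult.commute)
  finally have "ennreal (Yproc tau mu N \<omega> t powr p) \<le> ennreal (mu powr p) * ennreal ((a powr p) ^ heads \<omega> n)"
    by (simp add: ennreal_mult[symmetric] ennreal_leI)
  also have "\<dots> \<le> ennreal (mu powr p) * heads_majorant (a powr p) (real N * T) \<omega>"
  proof (intro mult_left_mono power_heads_le_majorant)
    show "1 \<le> a powr p"
      using a assms(2) by (simp add: ge_one_powr_ge_zero)
    fix m assume "m < n"
    then have "jump \<omega> (Suc m) \<le> real N * t"
      unfolding n_def by (rule jump_le_before_Least)
    also have "\<dots> \<le> real N * T"
      using assms(3) by (simp add: mult_left_mono)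
    finally show "jump \<omega> (Suc m) \<le> real N * T" .
  qed simp
  finally show ?thesis
    by (simp add: a_def)
qed

section \<open>Integrals over products of independent pairs\<close>

lemma nn_integral_pair_measure_mult:
  assumes "sigma_finite_measure B"
    and [measurable]: "G \<in> borel_measurable A" "H \<in> borel_measurable B"
  shows "(\<integral>\<^sup>+y. G (fst y) * H (snd y) \<partial>(A \<Otimes>\<^sub>M B)) = (\<integral>\<^sup>+a. G a \<partial>A) * (\<integral>\<^sup>+b. H b \<partial>B)"
proof -
  interpret B: sigma_finite_measure B by fact
  have "(\<integral>\<^sup>+y. G (fst y) * H (snd y) \<partial>(A \<Otimes>\<^sub>M B)) = (\<integral>\<^sup>+a. \<integral>\<^sup>+b. G a * H b \<partial>B \<partial>A)"
    by (subst B.nn_integral_fst[symmetric]) simp_all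
  also have "\<dots> = (\<integral>\<^sup>+a. G a * (\<integral>\<^sup>+b. H b \<partial>B) \<partial>A)"
    by (simp add: nn_integral_cmult)
  also have "\<dots> = (\<integral>\<^sup>+a. G a \<partial>A) * (\<integral>\<^sup>+b. H b \<partial>B)"
    by (rule nn_integral_multc) simp
  finally show ?thesis .
qed

lemma nn_integral_PiM_pair_measure_factor:
  fixes A :: "'a measure" and B :: "'b measure" and I :: "'i set"
  assumes A: "sigma_finite_measure A" and B: "sigma_finite_measure B" and "finite I"
    and "f \<in> borel_measurable (PiM I (\<lambda>_. B))"
    and g [measurable]: "\<And>i. g i \<in> borel_measurable A"
  shows "(\<integral>\<^sup>+x. f (\<lambda>i\<in>I. snd (x i)) * (\<Prod>i\<in>I. g i (fst (x i))) \<partial>PiM I (\<lambda>_. A \<Otimes>\<^sub>M B))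
       = (\<Prod>i\<in>I. \<integral>\<^sup>+a. g i a \<partial>A) * (\<integral>\<^sup>+y. f y \<partial>PiM I (\<lambda>_. B))"
  using assms(3,4)
proof (induction I arbitrary: f rule: finite_induct)
  case empty
  then show ?case
    by (simp add: PiM_empty nn_integral_count_space_finite)
next
  case (insert j I)
  note f [measurable] = insert.prems
  interpret B: sigma_finite_measure B by (rule B)
  interpret AB: product_sigma_finite "\<lambda>_::'i. A \<Otimes>\<^sub>M B"
    unfolding product_sigma_finite_def by (auto intro: sigma_finite_pair_measure A B)
  interpret PB: product_sigma_finite "\<lambda>_::'i. B"
    unfolding product_sigma_finite_def by (auto intro: B)
  let ?S = "\<lambda>x. \<lambda>i\<in>I. snd (x i)" and ?G = "\<lambda>x. \<Prod>i\<in>I. g i (fst (x i))"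
  define F where "F y = (\<integral>\<^sup>+b. f (y(j := b)) \<partial>B)" for y
  have F [measurable]: "F \<in> borel_measurable (PiM I (\<lambda>_. B))"
    unfolding F_def by (rule B.borel_measurable_nn_integral) measurable
  have "(\<integral>\<^sup>+x. f (\<lambda>i\<in>insert j I. snd (x i)) * (\<Prod>i\<in>insert j I. g i (fst (x i)))
          \<partial>PiM (insert j I) (\<lambda>_. A \<Otimes>\<^sub>M B))
      = (\<integral>\<^sup>+x. \<integral>\<^sup>+y. f (\<lambda>i\<in>insert j I. snd ((x(j := y)) i)) * (\<Prod>i\<in>insert j I. g i (fst ((x(j := y)) i)))
          \<partial>(A \<Otimes>\<^sub>M B) \<partial>PiM I (\<lambda>_. A \<Otimes>\<^sub>M B))"
    using insert.hyps by (intro AB.product_nn_integral_insert) measurable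
  also have "\<dots> = (\<integral>\<^sup>+x. (\<integral>\<^sup>+a. g j a \<partial>A) * (F (?S x) * ?G x) \<partial>PiM I (\<lambda>_. A \<Otimes>\<^sub>M B))"
  proof (rule nn_integral_cong)
    fix x :: "'i \<Rightarrow> 'a \<times> 'b"
    assume "x \<in> space (PiM I (\<lambda>_. A \<Otimes>\<^sub>M B))"
    then have "?S x \<in> space (PiM I (\<lambda>_. B))"
      by (auto simp: space_PiM space_pair_measure PiE_iff)
    then have [measurable]: "(\<lambda>b. f ((?S x)(j := b))) \<in> borel_measurable B"
      using insert.hyps(2) by (intro measurable_compose[OF measurable_component_update f])
    have "(\<lambda>i\<in>insert j I. snd ((x(j := y)) i)) = (?S x)(j := snd y)" for y
      using insert.hyps(2) by (auto simp: fun_eq_iff)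
    moreover have "(\<Prod>i\<in>I. g i (fst ((x(j := y)) i))) = ?G x" for y
      using insert.hyps(2) by (intro prod.cong) auto
    ultimately have "(\<integral>\<^sup>+y. f (\<lambda>i\<in>insert j I. snd ((x(j := y)) i)) * (\<Prod>i\<in>insert j I. g i (fst ((x(j := y)) i)))
          \<partial>(A \<Otimes>\<^sub>M B))
        = (\<integral>\<^sup>+y. g j (fst y) * f ((?S x)(j := snd y)) * ?G x \<partial>(A \<Otimes>\<^sub>M B))"
      using insert.hyps by (simp add: mult_ac)
    also have "\<dots> = (\<integral>\<^sup>+y. g j (fst y) * f ((?S x)(j := snd y)) \<partial>(A \<Otimes>\<^sub>M B)) * ?G x"
      by (rule nn_integral_multc) measurable
    also have "\<dots> = (\<integral>\<^sup>+a. g j a \<partial>A) * (F (?S x) * ?G x)"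
      using nn_integral_pair_measure_mult[OF B, of "g j" A "\<lambda>b. f ((?S x)(j := b))"]
      by (simp add: F_def mult.assoc)
    finally show "(\<integral>\<^sup>+y. f (\<lambda>i\<in>insert j I. snd ((x(j := y)) i))
          * (\<Prod>i\<in>insert j I. g i (fst ((x(j := y)) i))) \<partial>(A \<Otimes>\<^sub>M B))
        = (\<integral>\<^sup>+a. g j a \<partial>A) * (F (?S x) * ?G x)" .
  qed
  also have "\<dots> = (\<integral>\<^sup>+a. g j a \<partial>A) * ((\<Prod>i\<in>I. \<integral>\<^sup>+a. g i a \<partial>A) * (\<integral>\<^sup>+y. F y \<partial>PiM I (\<lambda>_. B)))"
    by (simp add: nn_integral_cmult insert.IH[OF F])
  also have "(\<integral>\<^sup>+y. F y \<partial>PiM I (\<lambda>_. B)) = (\<integral>\<^sup>+y. f y \<partial>PiM (insert j I) (\<lambda>_. B))"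
    unfolding F_def using insert.hyps by (simp add: PB.product_nn_integral_insert)
  finally show ?case
    using insert.hyps by (simp add: mult_ac)
qed

lemma (in product_prob_space) nn_integral_PiM_restrict_finite:
  assumes "finite J" "J \<subseteq> I" and [measurable]: "f \<in> borel_measurable (PiM J M)"
  shows "(\<integral>\<^sup>+x. f (restrict x J) \<partial>PiM I M) = (\<integral>\<^sup>+x. f x \<partial>PiM J M)"
proof -
  have "(\<integral>\<^sup>+x. f (restrict x J) \<partial>PiM I M) = (\<integral>\<^sup>+x. f x \<partial>distr (PiM I M) (PiM J M) (\<lambda>x. restrict x J))"
    using assms(2) by (intro nn_integral_distr[symmetric] measurable_restrict_subset) auto
  then show ?thesis
    using assms(1,2) by (simp add: distr_PiM_restrict_finite)
qed

lemma nn_integral_PiM_exponential_sum_le: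
  fixes I :: "'i set"
  assumes "finite I" "I \<noteq> {}" "0 < l" "0 \<le> s"
  shows "(\<integral>\<^sup>+y. indicator {..s} (\<Sum>i\<in>I. y i) \<partial>PiM I (\<lambda>_. density lborel (exponential_density l)))
           = ennreal (erlang_CDF (card I - 1) l s)"
proof -
  let ?E = "density lborel (exponential_density l)"
  let ?P = "PiM I (\<lambda>_. ?E)"
  interpret E: prob_space ?E
    using assms(3) by (rule prob_space_exponential_density)
  interpret P: prob_space ?P
    by (rule prob_space_PiM) (rule E.prob_space_axioms)
  have component: "distr ?P ?E (\<lambda>y. y i) = ?E" if "i \<in> I" for i
    using that by (intro distr_PiM_component E.prob_space_axioms)
  have "P.indep_vars (\<lambda>_. ?E) (\<lambda>i y. y i) I"
  proof (subst P.indep_vars_iff_distr_eq_PiM')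
    have "distr ?P ?P (\<lambda>y. \<lambda>i\<in>I. y i) = distr ?P ?P (\<lambda>y. y)"
      by (rule distr_cong) (auto simp: space_PiM)
    then show "distr ?P ?P (\<lambda>y. \<lambda>i\<in>I. y i) = PiM I (\<lambda>i. distr ?P ?E (\<lambda>y. y i))"
      by (simp add: component cong: PiM_cong)
  qed (use assms(2) in auto)
  then have "P.indep_vars (\<lambda>_. borel) (\<lambda>i y. y i) I"
    using P.indep_vars_compose2[of "\<lambda>_. ?E" _ I "\<lambda>_ x. x" "\<lambda>_. borel"] by simp
  moreover have "distributed ?P lborel (\<lambda>y. y i) (exponential_density l)" if "i \<in> I" for i
  proof -
    have "distr ?P lborel (\<lambda>y. y i) = distr ?P ?E (\<lambda>y. y i)"
      by (rule distr_cong) simp_all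
    then show ?thesis
      using that by (simp add: distributed_def component)
  qed
  ultimately have "distributed ?P lborel (\<lambda>y. \<Sum>i\<in>I. y i) (erlang_density (card I - 1) l)"
    using assms by (intro P.exponential_distributed_sum) auto
  then have "P.prob {y \<in> space ?P. (\<Sum>i\<in>I. y i) \<le> s} = erlang_CDF (card I - 1) l s"
    by (rule P.erlang_distributed_le) (use assms in auto)
  moreover have "(\<integral>\<^sup>+y. indicator {..s} (\<Sum>i\<in>I. y i) \<partial>?P)
      = (\<integral>\<^sup>+y. indicator {y \<in> space ?P. (\<Sum>i\<in>I. y i) \<le> s} y \<partial>?P)"
    by (intro nn_integral_cong) (auto simp: indicator_def)
  ultimately show ?thesis
    by (simp add: P.emeasure_eq_measure)
qed

lemma nn_integral_fair_coin:
  assumes "\<And>h. 0 \<le> w h"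
  shows "(\<integral>\<^sup>+h. ennreal (w h) \<partial>measure_pmf (bernoulli_pmf (1/2))) = ennreal ((w True + w False) / 2)"
proof -
  have "ennreal ((w True + w False) / 2) = ennreal (w True * (1/2)) + ennreal (w False * (1 - 1/2))"
    using assms by (subst ennreal_plus[symmetric]) (auto simp: field_simps simp del: ennreal_plus)
  also have "\<dots> = ennreal (w True) * ennreal (1/2) + ennreal (w False) * ennreal (1 - 1/2)"
    using assms by (simp only: ennreal_mult)
  finally show ?thesis
    by (subst nn_integral_bernoulli_pmf) auto
qed

lemma prod_nn_integral_fair_coin_weights:
  assumes "b \<ge> 0"
  shows "(\<Prod>i\<le>k. \<integral>\<^sup>+h. ennreal (if i < k then if h then b else 1 else of_bool h)
                   \<partial>measure_pmf (bernoulli_pmf (1/2)))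
           = ennreal (((1 + b) / 2) ^ k / 2)"
proof -
  have "(\<integral>\<^sup>+h. ennreal (if i < k then if h then b else 1 else of_bool h) \<partial>measure_pmf (bernoulli_pmf (1/2)))
      = ennreal (if i < k then (1 + b) / 2 else 1 / 2)" for i
    using assms by (subst nn_integral_fair_coin) (auto simp: add.commute)
  then have "(\<Prod>i\<le>k. \<integral>\<^sup>+h. ennreal (if i < k then if h then b else 1 else of_bool h)
                \<partial>measure_pmf (bernoulli_pmf (1/2)))
      = (\<Prod>i\<le>k. ennreal (if i < k then (1 + b) / 2 else 1 / 2))"
    by simp
  also have "\<dots> = ennreal (\<Prod>i\<le>k. if i < k then (1 + b) / 2 else 1 / 2)"
    using assms by (intro prod_ennreal) auto
  also have "(\<Prod>i\<le>k. if i < k then (1 + b) / 2 else 1 / 2) = ((1 + b) / 2) ^ k / (2 :: real)"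
    unfolding lessThan_Suc_atMost[symmetric] prod.lessThan_Suc by simp
  finally show ?thesis .
qed

section \<open>Poisson series\<close>

lemma sum_weighted_tails_eq:
  fixes q :: "nat \<Rightarrow> 'a :: comm_ring_1"
  shows "(\<Sum>k<K. (c - 1) * c ^ k * (1 - (\<Sum>n\<le>k. q n)))
           = (\<Sum>n\<le>K. c ^ n * q n) - 1 + c ^ K * (1 - (\<Sum>n\<le>K. q n))"
  by (induction K) (simp_all add: algebra_simps)

lemma sum_weighted_tails_le:
  fixes q :: "nat \<Rightarrow> real"
  assumes c: "c \<ge> 1" and q: "\<And>n. q n \<ge> 0" "q sums 1" and R: "(\<lambda>n. c ^ n * q n) sums R"
  shows "(\<Sum>k<K. (c - 1) * c ^ k * (1 - (\<Sum>n\<le>k. q n))) \<le> R - 1"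
proof -
  have "(\<lambda>i. q (i + Suc K)) sums (1 - (\<Sum>n\<le>K. q n))"
    using q(2) sums_iff_shift[of q "Suc K"] by (simp add: lessThan_Suc_atMost)
  then have tail: "(\<lambda>i. c ^ K * q (i + Suc K)) sums (c ^ K * (1 - (\<Sum>n\<le>K. q n)))"
    by (rule sums_mult)
  have weighted_tail: "(\<lambda>i. c ^ (i + Suc K) * q (i + Suc K)) sums (R - (\<Sum>n\<le>K. c ^ n * q n))"
    using R sums_iff_shift[of "\<lambda>n. c ^ n * q n" "Suc K"] by (simp add: lessThan_Suc_atMost)
  have "c ^ K * q (i + Suc K) \<le> c ^ (i + Suc K) * q (i + Suc K)" for i
    using c q(1) by (intro mult_right_mono power_increasing) auto
  then have "c ^ K * (1 - (\<Sum>n\<le>K. q n)) \<le> R - (\<Sum>n\<le>K. c ^ n * q n)"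
    using tail weighted_tail by (rule sums_le)
  then show ?thesis
    unfolding sum_weighted_tails_eq by simp
qed

lemma poisson_generating_function:
  fixes c x :: real
  shows "(\<lambda>n. c ^ n * (x ^ n * exp (- x) / fact n)) sums exp ((c - 1) * x)"
proof -
  have "(\<lambda>n. exp (- x) * ((c * x) ^ n / fact n)) sums (exp (- x) * exp (c * x))"
    using exp_converges[of "c * x"] by (intro sums_mult) (simp add: divide_inverse_commute)
  moreover have "exp (- x) * exp (c * x) = exp ((c - 1) * x)"
    by (simp add: exp_add[symmetric] algebra_simps)
  ultimately show ?thesis
    by (simp add: power_mult_distrib mult_ac)
qed

lemma erlang_CDF_series_le:
  assumes "c \<ge> 1" "0 \<le> l" "0 \<le> s"
  shows "(\<Sum>k<K. (c - 1) * c ^ k * erlang_CDF k l s) \<le> exp ((c - 1) * (l * s)) - 1"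
proof -
  define q where "q n = (l * s) ^ n * exp (- (l * s)) / fact n" for n
  have "erlang_CDF k l s = 1 - (\<Sum>n\<le>k. q n)" for k
    using assms by (simp add: erlang_CDF_def q_def)
  moreover have "(\<Sum>k<K. (c - 1) * c ^ k * (1 - (\<Sum>n\<le>k. q n))) \<le> exp ((c - 1) * (l * s)) - 1"
    using assms poisson_generating_function[of 1 "l * s"] poisson_generating_function[of c "l * s"]
    by (intro sum_weighted_tails_le) (simp_all add: q_def)
  ultimately show ?thesis
    by simp
qed

section \<open>Moments of the rescaled process\<close>

lemma majorant_term_measurable [measurable]: "(\<lambda>\<omega>. majorant_term b s k \<omega>) \<in> borel_measurable model_space"
  unfolding majorant_term_def jump_def power_heads_eq_prod model_space_def by measurable

lemma prob_space_model_space: "prob_space model_space"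
  unfolding model_space_def
  by (intro prob_space_PiM prob_space_pair prob_space_measure_pmf prob_space_exponential_density) simp

lemma nn_integral_majorant_term:
  assumes b: "b \<ge> 1" and s: "s \<ge> 0"
  shows "(\<integral>\<^sup>+\<omega>. majorant_term b s k \<omega> \<partial>model_space)
           = ennreal ((b - 1) / 2 * ((1 + b) / 2) ^ k * erlang_CDF k 1 s)"
proof -
  let ?coin = "measure_pmf (bernoulli_pmf (1/2))"
  let ?clock = "density lborel (exponential_density 1)"
  interpret clock: prob_space ?clock
    by (rule prob_space_exponential_density) simp
  interpret product_prob_space "\<lambda>_::nat. ?coin \<Otimes>\<^sub>M ?clock" UNIV
    by (intro product_prob_spaceI prob_space_pair prob_space_measure_pmf clock.prob_space_axioms)
  \<comment> \<open>a factor b for every earlier head, and the k-th coin must show heads\<close>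
  define w where "w i h = (if i < k then if h then b else 1 else of_bool h)" for i h
  define f where "f y = (indicator {..s} (\<Sum>i\<le>k. y i) :: ennreal)" for y :: "nat \<Rightarrow> real"
  define H where "H x = f (\<lambda>i\<in>{..k}. snd (x i)) * (\<Prod>i\<le>k. ennreal (w i (fst (x i))))"
    for x :: "nat \<Rightarrow> bool \<times> real"
  have [measurable]: "f \<in> borel_measurable (PiM {..k} (\<lambda>_. ?clock))"
    unfolding f_def by measurable
  have [measurable]: "H \<in> borel_measurable (PiM {..k} (\<lambda>_. ?coin \<Otimes>\<^sub>M ?clock))"
    unfolding H_def by measurable
  have "(\<Prod>i\<le>k. w i (fst (\<omega> i))) = of_bool (fst (\<omega> k)) * b ^ heads \<omega> k" for \<omega>
    unfolding power_heads_eq_prod lessThan_Suc_atMost[symmetric] prod.lessThan_Suc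
    by (simp add: w_def)
  then have "majorant_term b s k \<omega> = ennreal (b - 1) * H (restrict \<omega> {..k})" for \<omega>
    using b by (simp add: majorant_term_def H_def f_def w_def jump_def lessThan_Suc_atMost
                  prod_ennreal ennreal_mult[symmetric] indicator_def mult_ac)
  then have "(\<integral>\<^sup>+\<omega>. majorant_term b s k \<omega> \<partial>model_space)
      = ennreal (b - 1) * (\<integral>\<^sup>+x. H x \<partial>PiM {..k} (\<lambda>_. ?coin \<Otimes>\<^sub>M ?clock))"
    by (simp add: model_space_def nn_integral_cmult nn_integral_PiM_restrict_finite)
  also have "(\<integral>\<^sup>+x. H x \<partial>PiM {..k} (\<lambda>_. ?coin \<Otimes>\<^sub>M ?clock))
      = (\<Prod>i\<le>k. \<integral>\<^sup>+h. ennreal (w i h) \<partial>?coin) * (\<integral>\<^sup>+y. f y \<partial>PiM {..k} (\<lambda>_. ?clock))"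
    unfolding H_def
    by (rule nn_integral_PiM_pair_measure_factor)
       (simp_all add: prob_space_imp_sigma_finite prob_space_measure_pmf clock.prob_space_axioms)
  also have "(\<Prod>i\<le>k. \<integral>\<^sup>+h. ennreal (w i h) \<partial>?coin) = ennreal (((1 + b) / 2) ^ k / 2)"
    unfolding w_def using b by (intro prod_nn_integral_fair_coin_weights) simp
  also have "(\<integral>\<^sup>+y. f y \<partial>PiM {..k} (\<lambda>_. ?clock)) = ennreal (erlang_CDF k 1 s)"
    unfolding f_def using s by (subst nn_integral_PiM_exponential_sum_le) auto
  finally show ?thesis
    using b by (simp add: ennreal_mult[symmetric] erlang_CDF_nonneg mult_ac)
qed

lemma nn_integral_heads_majorant_le:
  assumes b: "b \<ge> 1" and s: "s \<ge> 0"
  shows "(\<integral>\<^sup>+\<omega>. heads_majorant b s \<omega> \<partial>model_space) \<le> ennreal (exp ((b - 1) / 2 * s))"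
proof -
  interpret prob_space model_space
    by (rule prob_space_model_space)
  define c where "c = (1 + b) / 2"
  have c: "c \<ge> 1" "(b - 1) / 2 = c - 1"
    using b by (simp_all add: c_def field_simps)
  have "(\<integral>\<^sup>+\<omega>. heads_majorant b s \<omega> \<partial>model_space) = 1 + (\<Sum>k. \<integral>\<^sup>+\<omega>. majorant_term b s k \<omega> \<partial>model_space)"
    unfolding heads_majorant_def by (simp add: nn_integral_add nn_integral_suminf emeasure_space_1)
  also have "\<dots> = 1 + (\<Sum>k. ennreal ((c - 1) * c ^ k * erlang_CDF k 1 s))"
    using b s by (simp add: nn_integral_majorant_term c_def field_simps)
  also have "(\<Sum>k. ennreal ((c - 1) * c ^ k * erlang_CDF k 1 s)) \<le> ennreal (exp ((c - 1) * s) - 1)"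
  proof (rule suminf_le_const)
    fix K
    have "(\<Sum>k<K. ennreal ((c - 1) * c ^ k * erlang_CDF k 1 s)) = ennreal (\<Sum>k<K. (c - 1) * c ^ k * erlang_CDF k 1 s)"
      using c by (intro sum_ennreal) (simp add: erlang_CDF_nonneg)
    also have "\<dots> \<le> ennreal (exp ((c - 1) * s) - 1)"
      using erlang_CDF_series_le[OF c(1), of 1 s K] s by (simp add: ennreal_leI)
    finally show "(\<Sum>k<K. ennreal ((c - 1) * c ^ k * erlang_CDF k 1 s)) \<le> ennreal (exp ((c - 1) * s) - 1)" .
  qed simp
  also have "1 + ennreal (exp ((c - 1) * s) - 1) = ennreal (exp ((c - 1) * s))"
    using c s ennreal_plus[of 1 "exp ((c - 1) * s) - 1"] by simp
  finally show ?thesis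
    unfolding c(2) by (simp add: add_left_mono)
qed

lemma one_plus_powr_mean_value:
  fixes h p :: real
  assumes "h > 0"
  obtains K where "1 < K" "K < 1 + h" "(1 + h) powr p - 1 = h * (p * K powr (p - 1))"
proof -
  have "\<exists>K>1. K < 1 + h \<and> (1 + h) powr p - 1 powr p = (1 + h - 1) * (p * K powr (p - 1))"
    using assms by (intro MVT2) (auto intro: has_real_derivative_powr)
  then show ?thesis
    using that by auto
qed

lemma nn_integral_sup_Yproc_powr_le:
  assumes "mu \<ge> 0" "p \<ge> 0" "T \<ge> 0"
  shows "(\<integral>\<^sup>+\<omega>. (SUP t\<in>{0..T}. ennreal (Yproc tau mu N \<omega> t powr p)) \<partial>model_space)
           \<le> ennreal (mu powr p * exp (((1 + 1 / real N) powr p - 1) / 2 * (real N * T)))"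
proof -
  define b where "b = (1 + 1 / real N) powr p"
  have b: "b \<ge> 1"
    using assms(2) by (simp add: b_def ge_one_powr_ge_zero)
  have [measurable]: "heads_majorant b (real N * T) \<in> borel_measurable model_space"
    unfolding heads_majorant_def by measurable
  have "(\<integral>\<^sup>+\<omega>. (SUP t\<in>{0..T}. ennreal (Yproc tau mu N \<omega> t powr p)) \<partial>model_space)
      \<le> (\<integral>\<^sup>+\<omega>. ennreal (mu powr p) * heads_majorant b (real N * T) \<omega> \<partial>model_space)"
    using Yproc_powr_le_majorant[OF assms(1,2)]
    by (intro nn_integral_mono SUP_least) (auto simp: b_def)
  also have "\<dots> = ennreal (mu powr p) * (\<integral>\<^sup>+\<omega>. heads_majorant b (real N * T) \<omega> \<partial>model_space)"
    by (rule nn_integral_cmult) measurable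
  also have "\<dots> \<le> ennreal (mu powr p) * ennreal (exp ((b - 1) / 2 * (real N * T)))"
    using b assms(3) by (intro mult_left_mono nn_integral_heads_majorant_le) auto
  finally show ?thesis
    by (simp add: b_def ennreal_mult)
qed

lemma exists_sup_Yproc_moment_bound:
  fixes tau mu p :: real and N :: nat
  assumes mu: "mu \<ge> 0" and p: "p \<ge> 1" and N: "N \<ge> 1"
  shows "\<exists>K::real. 1 < K \<and> K < 1 + 1 / real N \<and>
           (\<forall>T::real. T > 0 \<longrightarrow>
              (\<integral>\<^sup>+ \<omega>. (SUP t\<in>{0..T}. ennreal (Yproc tau mu N \<omega> t powr p)) \<partial>model_space)
                \<le> ennreal (mu powr p * exp (p * K powr (p - 1) * T)))"
proof -
  obtain K where K: "1 < K" "K < 1 + 1 / real N"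
    and mvt: "(1 + 1 / real N) powr p - 1 = 1 / real N * (p * K powr (p - 1))"
    using one_plus_powr_mean_value[of "1 / real N" p] N by auto
  have "(\<integral>\<^sup>+ \<omega>. (SUP t\<in>{0..T}. ennreal (Yproc tau mu N \<omega> t powr p)) \<partial>model_space)
          \<le> ennreal (mu powr p * exp (p * K powr (p - 1) * T))" if T: "T > 0" for T
  proof -
    have "((1 + 1 / real N) powr p - 1) / 2 * (real N * T) = p * K powr (p - 1) * T / 2"
      using N by (simp add: mvt)
    also have "\<dots> \<le> p * K powr (p - 1) * T"
      using p T by simp
    finally have "ennreal (mu powr p * exp (((1 + 1 / real N) powr p - 1) / 2 * (real N * T)))
        \<le> ennreal (mu powr p * exp (p * K powr (p - 1) * T))"
      by (intro ennreal_leI mult_left_mono) simp_all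
    then show ?thesis
      using p by (intro order_trans[OF nn_integral_sup_Yproc_powr_le[OF mu _ less_imp_le[OF T]]]) simp_all
  qed
  with K show ?thesis
    by blast
qed

lemma nn_integral_Yproc_powr_le_uniform:
  assumes "mu \<ge> 0" "p \<ge> 1" "N \<ge> 1" "T > 0" "t \<in> {0..T}"
  shows "(\<integral>\<^sup>+\<omega>. ennreal (Yproc tau mu N \<omega> t powr p) \<partial>model_space)
           \<le> ennreal (mu powr p * exp (p * 2 powr (p - 1) * T))"
proof -
  obtain K where K: "1 < K" "K < 1 + 1 / real N"
    and bound: "(\<integral>\<^sup>+ \<omega>. (SUP t\<in>{0..T}. ennreal (Yproc tau mu N \<omega> t powr p)) \<partial>model_space)
                  \<le> ennreal (mu powr p * exp (p * K powr (p - 1) * T))"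
    using exists_sup_Yproc_moment_bound[OF assms(1-3), of tau] assms(4) by blast
  have "1 / real N \<le> 1"
    using assms(3) by simp
  then have "K powr (p - 1) \<le> 2 powr (p - 1)"
    using K assms(2) by (intro powr_mono2) auto
  then have "exp (p * K powr (p - 1) * T) \<le> exp (p * 2 powr (p - 1) * T)"
    using assms(2,4) by (simp add: mult_right_mono)
  then have "ennreal (mu powr p * exp (p * K powr (p - 1) * T))
      \<le> ennreal (mu powr p * exp (p * 2 powr (p - 1) * T))"
    by (intro ennreal_leI mult_left_mono) simp_all
  moreover have "(\<integral>\<^sup>+\<omega>. ennreal (Yproc tau mu N \<omega> t powr p) \<partial>model_space)
      \<le> (\<integral>\<^sup>+ \<omega>. (SUP t\<in>{0..T}. ennreal (Yproc tau mu N \<omega> t powr p)) \<partial>model_space)"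
    using assms(5) by (intro nn_integral_mono SUP_upper)
  ultimately show ?thesis
    using bound by (meson order_trans)
qed

theorem lemma3p1:
  fixes tau mu :: real
  assumes "tau > 0" and "mu \<ge> 0"
  shows "(\<forall>p::real. p \<ge> 1 \<longrightarrow> (\<forall>N::nat. N \<ge> 1 \<longrightarrow>
            (\<exists>K::real. 1 < K \<and> K < 1 + 1 / real N \<and>
              (\<forall>T::real. T > 0 \<longrightarrow>
                 (\<integral>\<^sup>+ \<omega>. (SUP t\<in>{0..T}. ennreal (Yproc tau mu N \<omega> t powr p)) \<partial>model_space)
                   \<le> ennreal (mu powr p * exp (p * K powr (p - 1) * T))))))
       \<and> (\<forall>p::real. p \<ge> 1 \<longrightarrow> (\<forall>T::real. T > 0 \<longrightarrow>
            (\<exists>C::real. \<forall>N::nat. N \<ge> 1 \<longrightarrow> (\<forall>t\<in>{0..T}.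
               (\<integral>\<^sup>+ \<omega>. ennreal (Yproc tau mu N \<omega> t powr p) \<partial>model_space) \<le> ennreal C))))"
  using exists_sup_Yproc_moment_bound[OF assms(2)] nn_integral_Yproc_powr_le_uniform[OF assms(2)] by blast

end
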